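(* Let $G=(V,E)$ be a 2-tree. Then $G$ contains no split independent set; that is, there is no set $S\subseteq V$ such that $S$ is independent in $G$ and the induced subgraph $\langle V\setminus S\rangle$ is either disconnected or isomorphic to $K_1$.
   Context: All graphs are finite, simple (no loops or multiple edges) and undirected. A 2-tree is a graph obtained from the triangle $K_3$ by repeatedly adding a new vertex adjacent to exactly the two endpoints of some existing edge. For $X\subseteq V$, $\langle X\rangle$ denotes the subgraph of $G$ induced by $X$. A set $S\subseteq V$ is a split independent set if $S$ is independent (no two vertices of $S$ are adjacent) and $\langle V\setminus S\rangle$ is either disconnected or a $K_1$. *)

theory Defs
  imports Main
begin

text \<open>A finite simple graph is given by a vertex set V and a set E of
  2-element subsets of V (undirected edges, no loops).\<close>

inductive two_tree :: "'a set \<Rightarrow> 'a set set \<Rightarrow> bool" where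
  triangle: "a \<noteq> b \<Longrightarrow> b \<noteq> c \<Longrightarrow> a \<noteq> c \<Longrightarrow>
     two_tree {a, b, c} {{a, b}, {b, c}, {a, c}}"
| add_vertex: "two_tree V E \<Longrightarrow> {u, w} \<in> E \<Longrightarrow> v \<notin> V \<Longrightarrow>
     two_tree (insert v V) (E \<union> {{v, u}, {v, w}})"

definition independent_set :: "'a set set \<Rightarrow> 'a set \<Rightarrow> bool" where
  "independent_set E S \<longleftrightarrow> (\<forall>x\<in>S. \<forall>y\<in>S. {x, y} \<notin> E)"

definition induced_adj :: "'a set set \<Rightarrow> 'a set \<Rightarrow> 'a \<Rightarrow> 'a \<Rightarrow> bool" where
  "induced_adj E X x y \<longleftrightarrow> x \<in> X \<and> y \<in> X \<and> {x, y} \<in> E"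

definition induced_disconnected :: "'a set set \<Rightarrow> 'a set \<Rightarrow> bool" where
  "induced_disconnected E X \<longleftrightarrow>
     (\<exists>x\<in>X. \<exists>y\<in>X. \<not> (induced_adj E X)\<^sup>*\<^sup>* x y)"

definition split_independent_set :: "'a set \<Rightarrow> 'a set set \<Rightarrow> 'a set \<Rightarrow> bool" where
  "split_independent_set V E S \<longleftrightarrow>
     S \<subseteq> V \<and> independent_set E S \<and>
     (induced_disconnected E (V - S) \<or> card (V - S) = 1)"

end

theory Submission
  imports Defs
begin

text \<open>Deleting an independent set S from a 2-tree leaves a connected graph, by induction along
  the construction: a new vertex v either lies in S, and removing it changes nothing, or it
  survives together with at least one end of its base edge, because those two ends are adjacent
  and so cannot both lie in S. And V - S is never a single vertex, since S contains at most one
  vertex of any triangle.\<close>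

definition induced_connected :: "'a set set \<Rightarrow> 'a set \<Rightarrow> bool" where
  "induced_connected E X \<longleftrightarrow> (\<forall>x\<in>X. \<forall>y\<in>X. (induced_adj E X)\<^sup>*\<^sup>* x y)"

lemma induced_adj_rtranclp_mono:
  assumes "(induced_adj E X)\<^sup>*\<^sup>* x y" "E \<subseteq> E'" "X \<subseteq> X'"
  shows "(induced_adj E' X')\<^sup>*\<^sup>* x y"
  using assms(1)
proof (induction rule: rtranclp_induct)
  case (step y z)
  then have "induced_adj E' X' y z" using assms(2,3) by (auto simp: induced_adj_def)
  with step.IH show ?case by simp
qed simp

lemma induced_connected_mono_edges:
  "induced_connected E X \<Longrightarrow> E \<subseteq> E' \<Longrightarrow> induced_connected E' X"
  unfolding induced_connected_def by (metis induced_adj_rtranclp_mono order_refl)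

lemma induced_connected_insert:
  assumes conn: "induced_connected E X" and t: "t \<in> X" "{v, t} \<in> E"
  shows "induced_connected E (insert v X)"
proof -
  let ?R = "induced_adj E (insert v X)"
  have reach_X: "?R\<^sup>*\<^sup>* x y" if "x \<in> X" "y \<in> X" for x y
  proof -
    have "(induced_adj E X)\<^sup>*\<^sup>* x y" using conn that unfolding induced_connected_def by simp
    then show ?thesis by (rule induced_adj_rtranclp_mono) auto
  qed
  have "{t, v} \<in> E" using t(2) by (simp add: insert_commute)
  with t have "?R v t" "?R t v" unfolding induced_adj_def by simp_all
  have hub: "?R\<^sup>*\<^sup>* z t \<and> ?R\<^sup>*\<^sup>* t z" if "z \<in> insert v X" for z
  proof (cases "z = v")
    case True
    with \<open>?R v t\<close> \<open>?R t v\<close> show ?thesis by (simp add: r_into_rtranclp)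
  next
    case False
    with that have "z \<in> X" by simp
    with reach_X t(1) show ?thesis by simp
  qed
  show ?thesis unfolding induced_connected_def
  proof (intro ballI)
    fix x y assume "x \<in> insert v X" "y \<in> insert v X"
    with hub have "?R\<^sup>*\<^sup>* x t" "?R\<^sup>*\<^sup>* t y" by simp_all
    then show "?R\<^sup>*\<^sup>* x y" by (rule rtranclp_trans)
  qed
qed

lemma induced_connected_complete:
  assumes "\<And>x y. x \<in> X \<Longrightarrow> y \<in> X \<Longrightarrow> x \<noteq> y \<Longrightarrow> {x, y} \<in> E"
  shows "induced_connected E X"
  unfolding induced_connected_def
proof (intro ballI)
  fix x y assume "x \<in> X" "y \<in> X"
  then show "(induced_adj E X)\<^sup>*\<^sup>* x y"
    using assms by (cases "x = y") (simp_all add: induced_adj_def r_into_rtranclp)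
qed

lemma induced_connected_iff_not_disconnected:
  "induced_connected E X \<longleftrightarrow> \<not> induced_disconnected E X"
  unfolding induced_connected_def induced_disconnected_def by simp

lemma two_tree_edge_subset: "two_tree V E \<Longrightarrow> e \<in> E \<Longrightarrow> e \<subseteq> V"
  by (induction arbitrary: e rule: two_tree.induct) auto

lemma two_tree_has_triangle:
  "two_tree V E \<Longrightarrow> \<exists>a\<in>V. \<exists>b\<in>V. \<exists>c\<in>V. a \<noteq> b \<and> b \<noteq> c \<and> a \<noteq> c
     \<and> {a, b} \<in> E \<and> {b, c} \<in> E \<and> {a, c} \<in> E"
  by (induction rule: two_tree.induct) blast+

lemma two_tree_induced_connected_diff_independent:
  "two_tree V E \<Longrightarrow> independent_set E S \<Longrightarrow> induced_connected E (V - S)"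
proof (induction arbitrary: S rule: two_tree.induct)
  case (triangle a b c)
  show ?case
    by (rule induced_connected_complete) (auto simp: insert_commute)
next
  case (add_vertex V E u w v)
  let ?E' = "E \<union> {{v, u}, {v, w}}"
  have "independent_set E (S - {v})"
    using add_vertex.prems by (auto simp: independent_set_def)
  with add_vertex.IH have conn: "induced_connected ?E' (V - (S - {v}))"
    by (metis induced_connected_mono_edges Un_upper1)
  show ?case
  proof (cases "v \<in> S")
    case True
    then have "insert v V - S = V - (S - {v})" using add_vertex.hyps(3) by auto
    with conn show ?thesis by simp
  next
    case False
    then have split: "insert v V - S = insert v (V - (S - {v}))" by auto
    have "u \<in> V" "w \<in> V" using two_tree_edge_subset[OF add_vertex.hyps(1,2)] by auto
    moreover have "u \<notin> S \<or> w \<notin> S"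
      using add_vertex.prems add_vertex.hyps(2) unfolding independent_set_def by blast
    ultimately obtain t where "t \<in> V - (S - {v})" "{v, t} \<in> ?E'" by blast
    with conn have "induced_connected ?E' (insert v (V - (S - {v})))"
      by (rule induced_connected_insert)
    with split show ?thesis by simp
  qed
qed

lemma two_tree_card_diff_independent:
  assumes "two_tree V E" and "independent_set E S"
  shows "card (V - S) \<noteq> 1"
proof
  assume "card (V - S) = 1"
  then obtain x where x: "V - S = {x}" by (auto simp: card_Suc_eq)
  obtain a b c where abc: "a \<in> V" "b \<in> V" "c \<in> V" "a \<noteq> b" "b \<noteq> c" "a \<noteq> c"
    and edges: "{a, b} \<in> E" "{b, c} \<in> E" "{a, c} \<in> E"
    using two_tree_has_triangle[OF assms(1)] by blast
  have "z \<in> S" if "z \<in> V" "z \<noteq> x" for z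
    using x that by blast
  with abc have "(a \<in> S \<and> b \<in> S) \<or> (b \<in> S \<and> c \<in> S) \<or> (a \<in> S \<and> c \<in> S)"
    by metis
  with edges assms(2) show False unfolding independent_set_def by blast
qed

theorem mainTheorem1:
  fixes V :: "'a set" and E :: "'a set set"
  assumes "two_tree V E"
  shows "\<not> (\<exists>S. split_independent_set V E S)"
  using two_tree_induced_connected_diff_independent[OF assms]
    two_tree_card_diff_independent[OF assms]
  unfolding split_independent_set_def induced_connected_iff_not_disconnected
  by blast

end
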